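(* Let $k\ge3$, $1\le s\le k$, $r\le\min\{n_1,\dots,n_s\}$, $\mathcal A\in\mathbb R^{n_1}\otimes\cdots\otimes\mathbb R^{n_k}$ nonzero, and let $\{U_{[p]}\}$ be generated by the iAPD-ALS algorithm (described in the context) with proximal parameter $\epsilon>0$ and truncation parameter $\kappa$. If the $p$-th iteration is not a truncation iteration, then $$f(U_{[p]})-f(U_{[p-1]})\ge\frac{\min\{\epsilon,2\kappa^2\}}{2}\,\|U_{[p]}-U_{[p-1]}\|_F^2 .$$
   Context: Notation. $\mathrm V(m,n)=\{U\in\mathbb R^{n\times m}:U^{\mathsf T}U=I_m\}$; $\mathrm B(m,n)$: $n\times m$ real matrices with unit columns. $\mathcal A\tau(\mathbf u_1,\dots,\mathbf u_k)=\langle\mathcal A,\mathbf u_1\otimes\cdots\otimes\mathbf u_k\rangle$; $\mathcal A\tau_i(\mathbf u_1,\dots,\mathbf u_k)\in\mathbb R^{n_i}$ is the contraction of $\mathcal A$ with all $\mathbf u_l$, $l\ne i$. For $U=(U^{(1)},\dots,U^{(k)})$ with columns $\mathbf u^{(i)}_j$, $j\le t$: $f(U)=\sum_j\mathcal A\tau(\mathbf u^{(1)}_j,\dots,\mathbf u^{(k)}_j)^2$, $\|U\|_F^2=\sum_i\|U^{(i)}\|_F^2$. $\operatorname{Polar}(X)$ is the set of $Q\in\mathrm V(m,n)$ maximizing $\langle Q,X\rangle$. iAPD-ALS algorithm. Choose $U_{[0]}\in\mathrm V(r,n_1)\times\cdots\times\mathrm V(r,n_s)\times\mathrm B(r,n_{s+1})\times\cdots\times\mathrm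 B(r,n_k)$ with $f(U_{[0]})>0$ and $\kappa\in(0,\sqrt{f(U_{[0]})/r})$. For $p=1,2,\dots$ ($t$ = current number of columns, $\mathbf u^{(i)}_{j,[q]}$ = $j$-th column of $U^{(i)}_{[q]}$), let $\mathbf x^i_{j,[p]}=(\mathbf u^{(1)}_{j,[p]},\dots,\mathbf u^{(i-1)}_{j,[p]},\mathbf u^{(i)}_{j,[p-1]},\dots,\mathbf u^{(k)}_{j,[p-1]})$, $\lambda^{i-1}_{j,[p]}=\mathcal A\tau(\mathbf x^i_{j,[p]})$, $\Lambda^{(i)}_{[p]}=\operatorname{diag}(\lambda^{i-1}_{j,[p]})_j$, $V^{(i)}_{[p]}=[\mathcal A\tau_i(\mathbf x^i_{j,[p]})]_j$. (1) For $i=1,\dots,s$ in turn pick $U^{(i)}_{[p]}\in\operatorname{Polar}(V^{(i)}_{[p]}\Lambda^{(i)}_{[p]})$, and if the smallest eigenvalue of $(U^{(i)}_{[p]})^{\mathsf T}V^{(i)}_{[p]}\Lambda^{(i)}_{[p]}$ is $<\epsilon$, instead pick $U^{(i)}_{[p]}\in\operatorname{Polar}(V^{(i)}_{[p]}\Lambda^{(i)}_{[p]}+\epsilon U^{(i)}_{[p-1]})$. (2) Truncation: with $J=\{j:|((U^{(s)}_{[p]})^{\mathsf T}V^{(s)}_{[p]})_{jj}|<\kappa\}$, if $J\neq\emptyset$ (a truncation iteration) delete columns in $J$ from $U^{(1)}_{[p]},\dots,U^{(s)}_{[p]}$ and $U^{(s+1)}_{[p-1]},\dots,U^{(k)}_{[p-1]}$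 and set $t:=t-|J|$. (3) For $i=s+1,\dots,k$ in turn, $\mathbf u^{(i)}_{j,[p]}=\operatorname{sgn}(\lambda^{i-1}_{j,[p]})\mathcal A\tau_i(\mathbf x^i_{j,[p]})/\|\mathcal A\tau_i(\mathbf x^i_{j,[p]})\|$. Set $U_{[p]}=(U^{(1)}_{[p]},\dots,U^{(k)}_{[p]})$ and iterate indefinitely. *)

theory Defs
  imports "HOL-Analysis.Analysis"
begin

text \<open>Modes are numbered 1..k, the dimension of mode i is n i.
A tensor is a real function on multi-indices; only its values on
tidx k n (multi-indices with 0 \<le> idx i < n i for i in 1..k) matter.
A vector in R^m is a function nat => real (entries 0..m-1).
A matrix with m rows is a function nat => nat => real, Q a j = entry in row a,
column j.  Columns are identified by their ORIGINAL labels j < r, and the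
set of labels of the columns still present is carried explicitly; deleting
columns (truncation) = removing labels from that set.\<close>

type_synonym vec = "nat \<Rightarrow> real"
type_synonym mat = "nat \<Rightarrow> nat \<Rightarrow> real"
type_synonym tensor = "(nat \<Rightarrow> nat) \<Rightarrow> real"

definition tidx :: "nat \<Rightarrow> (nat \<Rightarrow> nat) \<Rightarrow> (nat \<Rightarrow> nat) set" where
  "tidx k n = PiE {1..k} (\<lambda>i. {..<n i})"

definition tcontr :: "nat \<Rightarrow> (nat \<Rightarrow> nat) \<Rightarrow> tensor \<Rightarrow> (nat \<Rightarrow> vec) \<Rightarrow> real" where
  "tcontr k n A u = (\<Sum>\<iota>\<in>tidx k n. A \<iota> * (\<Prod>l\<in>{1..k}. u l (\<iota> l)))"

definition tcontr_mode :: "nat \<Rightarrow> (nat \<Rightarrow> nat) \<Rightarrow> tensor \<Rightarrow> (nat \<Rightarrow> vec) \<Rightarrow> nat \<Rightarrow> vec" where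
  "tcontr_mode k n A u i = (\<lambda>a. \<Sum>\<iota>\<in>{\<iota>\<in>tidx k n. \<iota> i = a}.
       A \<iota> * (\<Prod>l\<in>{1..k} - {i}. u l (\<iota> l)))"

definition orth_cols :: "nat \<Rightarrow> nat set \<Rightarrow> mat \<Rightarrow> bool" where
  "orth_cols m J Q \<longleftrightarrow>
     (\<forall>j\<in>J. \<forall>j'\<in>J. (\<Sum>a<m. Q a j * Q a j') = (if j = j' then 1 else 0))"

definition unit_cols :: "nat \<Rightarrow> nat set \<Rightarrow> mat \<Rightarrow> bool" where
  "unit_cols m J Q \<longleftrightarrow> (\<forall>j\<in>J. (\<Sum>a<m. (Q a j)\<^sup>2) = 1)"

definition frob_inner :: "nat \<Rightarrow> nat set \<Rightarrow> mat \<Rightarrow> mat \<Rightarrow> real" where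
  "frob_inner m J P Q = (\<Sum>a<m. \<Sum>j\<in>J. P a j * Q a j)"

definition in_polar :: "nat \<Rightarrow> nat set \<Rightarrow> mat \<Rightarrow> mat \<Rightarrow> bool" where
  "in_polar m J X Q \<longleftrightarrow> orth_cols m J Q \<and>
     (\<forall>Q'. orth_cols m J Q' \<longrightarrow> frob_inner m J Q' X \<le> frob_inner m J Q X)"

definition mtmul :: "nat \<Rightarrow> mat \<Rightarrow> mat \<Rightarrow> mat" where
  "mtmul m Q X = (\<lambda>j j'. \<Sum>a<m. Q a j * X a j')"

definition real_eigenvalue :: "nat set \<Rightarrow> mat \<Rightarrow> real \<Rightarrow> bool" where
  "real_eigenvalue J M \<mu> \<longleftrightarrow>
     (\<exists>x::vec. (\<exists>j\<in>J. x j \<noteq> 0) \<and> (\<forall>j\<in>J. (\<Sum>j'\<in>J. M j j' * x j') = \<mu> * x j))"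

text \<open>"the smallest eigenvalue of M is < e" (M is symmetric in the use below)\<close>
definition min_eig_less :: "nat set \<Rightarrow> mat \<Rightarrow> real \<Rightarrow> bool" where
  "min_eig_less J M e \<longleftrightarrow> (\<exists>\<mu>. real_eigenvalue J M \<mu> \<and> \<mu> < e)"

text \<open>An iterate sequence: U p i a j = entry (a,j) of U^(i)_[p]; the column j of
U^(i)_[p] is u^(i)_(j,[p]) = (\<lambda>a. U p i a j).\<close>

definition col :: "(nat \<Rightarrow> nat \<Rightarrow> mat) \<Rightarrow> nat \<Rightarrow> nat \<Rightarrow> nat \<Rightarrow> vec" where
  "col U q i j = (\<lambda>a. U q i a j)"

definition xvec :: "(nat \<Rightarrow> nat \<Rightarrow> mat) \<Rightarrow> nat \<Rightarrow> nat \<Rightarrow> nat \<Rightarrow> nat \<Rightarrow> vec" where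
  "xvec U p i j = (\<lambda>l. if l < i then col U p l j else col U (p - 1) l j)"

definition lam :: "nat \<Rightarrow> (nat \<Rightarrow> nat) \<Rightarrow> tensor \<Rightarrow> (nat \<Rightarrow> nat \<Rightarrow> mat) \<Rightarrow> nat \<Rightarrow> nat \<Rightarrow> nat \<Rightarrow> real" where
  "lam k n A U p i j = tcontr k n A (xvec U p i j)"

definition Vmat :: "nat \<Rightarrow> (nat \<Rightarrow> nat) \<Rightarrow> tensor \<Rightarrow> (nat \<Rightarrow> nat \<Rightarrow> mat) \<Rightarrow> nat \<Rightarrow> nat \<Rightarrow> mat" where
  "Vmat k n A U p i = (\<lambda>a j. tcontr_mode k n A (xvec U p i j) i a)"

definition VLam :: "nat \<Rightarrow> (nat \<Rightarrow> nat) \<Rightarrow> tensor \<Rightarrow> (nat \<Rightarrow> nat \<Rightarrow> mat) \<Rightarrow> nat \<Rightarrow> nat \<Rightarrow> mat" where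
  "VLam k n A U p i = (\<lambda>a j. Vmat k n A U p i a j * lam k n A U p i j)"

definition fobj :: "nat \<Rightarrow> (nat \<Rightarrow> nat) \<Rightarrow> tensor \<Rightarrow> (nat \<Rightarrow> nat \<Rightarrow> mat) \<Rightarrow> nat set \<Rightarrow> nat \<Rightarrow> real" where
  "fobj k n A U J q = (\<Sum>j\<in>J. (tcontr k n A (\<lambda>l. col U q l j))\<^sup>2)"

definition frob_dist2 :: "nat \<Rightarrow> (nat \<Rightarrow> nat) \<Rightarrow> (nat \<Rightarrow> nat \<Rightarrow> mat) \<Rightarrow> nat set \<Rightarrow> nat \<Rightarrow> nat \<Rightarrow> real" where
  "frob_dist2 k n U J p q = (\<Sum>i\<in>{1..k}. \<Sum>a<n i. \<Sum>j\<in>J. (U p i a j - U q i a j)\<^sup>2)"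

text \<open>The iAPD-ALS iteration relations. Js q = set of labels of the columns
present in U_[q].\<close>
definition iAPD_ALS :: "nat \<Rightarrow> nat \<Rightarrow> (nat \<Rightarrow> nat) \<Rightarrow> nat \<Rightarrow> tensor \<Rightarrow> real \<Rightarrow> real
    \<Rightarrow> (nat \<Rightarrow> nat \<Rightarrow> mat) \<Rightarrow> (nat \<Rightarrow> nat set) \<Rightarrow> bool" where
  "iAPD_ALS k s n r A \<epsilon> \<kappa> U Js \<longleftrightarrow>
     \<comment> \<open>initialization\<close>
     Js 0 = {..<r} \<and>
     (\<forall>i\<in>{1..s}. orth_cols (n i) {..<r} (U 0 i)) \<and>
     (\<forall>i\<in>{s+1..k}. unit_cols (n i) {..<r} (U 0 i)) \<and>
     fobj k n A U (Js 0) 0 > 0 \<and>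
     0 < \<kappa> \<and> \<kappa> < sqrt (fobj k n A U (Js 0) 0 / real r) \<and>
     (\<forall>p\<ge>1.
       \<comment> \<open>step (1): modes 1..s, columns Js (p-1)\<close>
       (\<forall>i\<in>{1..s}.
          (in_polar (n i) (Js (p - 1)) (VLam k n A U p i) (U p i) \<and>
           \<not> min_eig_less (Js (p - 1)) (mtmul (n i) (U p i) (VLam k n A U p i)) \<epsilon>)
        \<or> ((\<exists>Q. in_polar (n i) (Js (p - 1)) (VLam k n A U p i) Q \<and>
                 min_eig_less (Js (p - 1)) (mtmul (n i) Q (VLam k n A U p i)) \<epsilon>) \<and>
           in_polar (n i) (Js (p - 1))
             (\<lambda>a j. VLam k n A U p i a j + \<epsilon> * U (p - 1) i a j) (U p i))) \<and>
       \<comment> \<open>step (2): truncation\<close>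
       Js p = {j \<in> Js (p - 1). \<bar>mtmul (n s) (U p s) (Vmat k n A U p s) j j\<bar> \<ge> \<kappa>} \<and>
       \<comment> \<open>step (3): modes s+1..k, columns Js p\<close>
       (\<forall>i\<in>{s+1..k}. \<forall>j\<in>Js p. \<forall>a<n i.
          U p i a j = sgn (lam k n A U p i j) * Vmat k n A U p i a j
                      / sqrt (\<Sum>b<n i. (Vmat k n A U p i b j)\<^sup>2)))"

end

theory Submission
  imports Defs
begin

text \<open>
  Within one sweep the columns change mode by mode, so f(U_[p]) - f(U_[p-1]) telescopes
  into the sum over the modes i of the increments of the squared contractions lam.
  For an orthogonal mode i \<le> s the increment is at least 2 <U_[p] - U_[p-1], V Lambda>,
  and the polar step makes this at least eps |U_[p] - U_[p-1]|^2: with the proximal term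
  by comparing with U_[p-1] directly, and without it because a polar factor Q of X
  satisfies X = Q S with S = Q^T X symmetric, and S \<ge> eps by the eigenvalue test.
  For a normalised mode i > s, the truncation test at mode s and Cauchy-Schwarz propagate
  |lam| \<ge> kappa along the sweep, and normalising V with |V| \<ge> |lam| \<ge> kappa
  raises lam^2 by at least kappa^2 |u_[p] - u_[p-1]|^2.
\<close>

section \<open>Vanishing first-order terms\<close>

lemma quadratic_nonneg_imp_linear_coeff_zero:
  fixes a b :: real
  assumes "\<And>t. 0 \<le> a * t + b * t\<^sup>2"
  shows "a = 0"
proof (rule ccontr)
  assume "a \<noteq> 0"
  define B where "B = \<bar>b\<bar> + 1"
  have B: "B > 0" "b < B" by (auto simp: B_def)
  have "0 \<le> a * (- a / (2 * B)) + b * (- a / (2 * B))\<^sup>2" by (rule assms)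
  also have "\<dots> = a\<^sup>2 * (b - 2 * B) / (4 * B\<^sup>2)"
    using B by (simp add: field_simps power2_eq_square)
  finally have "0 \<le> a\<^sup>2 * (b - 2 * B)"
    using B by (simp add: zero_le_divide_iff)
  moreover have "a\<^sup>2 * (b - 2 * B) < 0"
    using \<open>a \<noteq> 0\<close> B by (intro mult_pos_neg) auto
  ultimately show False by simp
qed

text \<open>The rational parametrisation of the unit circle turns the hypothesis into a
  quadratic inequality in the parameter.\<close>

lemma unit_circle_variation_imp_zero:
  fixes \<alpha> \<beta> :: real
  assumes "\<And>c s. c\<^sup>2 + s\<^sup>2 = 1 \<Longrightarrow> (c - 1) * \<alpha> + s * \<beta> \<le> 0"
  shows "\<beta> = 0"
proof -
  have "0 \<le> (- 2 * \<beta>) * t + (2 * \<alpha>) * t\<^sup>2" for t :: real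
  proof -
    define c where "c = (1 - t\<^sup>2) / (1 + t\<^sup>2)"
    define s where "s = 2 * t / (1 + t\<^sup>2)"
    have d: "1 + t\<^sup>2 > 0" by (simp add: add_pos_nonneg)
    have "c\<^sup>2 + s\<^sup>2 = ((1 - t\<^sup>2)\<^sup>2 + (2 * t)\<^sup>2) / (1 + t\<^sup>2)\<^sup>2"
      unfolding c_def s_def by (simp add: power_divide add_divide_distrib)
    also have "(1 - t\<^sup>2)\<^sup>2 + (2 * t)\<^sup>2 = (1 + t\<^sup>2)\<^sup>2"
      by (simp add: power2_eq_square algebra_simps)
    finally have "(c - 1) * \<alpha> + s * \<beta> \<le> 0" using d by (intro assms) simp
    moreover have "(c - 1) * \<alpha> + s * \<beta> = (2 * t * \<beta> - 2 * t\<^sup>2 * \<alpha>) / (1 + t\<^sup>2)"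
    proof -
      have "c - 1 = - 2 * t\<^sup>2 / (1 + t\<^sup>2)" unfolding c_def using d by (simp add: field_simps)
      then show ?thesis unfolding s_def by (simp add: add_divide_distrib diff_divide_distrib)
    qed
    ultimately have "2 * t * \<beta> - 2 * t\<^sup>2 * \<alpha> \<le> 0" using d by (simp add: divide_le_0_iff)
    then show ?thesis by (simp add: algebra_simps)
  qed
  from quadratic_nonneg_imp_linear_coeff_zero[OF this] show ?thesis by simp
qed

section \<open>Symmetric bilinear forms\<close>

definition bilin_form :: "nat set \<Rightarrow> mat \<Rightarrow> vec \<Rightarrow> vec \<Rightarrow> real" where
  "bilin_form J S u v = (\<Sum>j\<in>J. \<Sum>j'\<in>J. u j * S j j' * v j')"

lemma bilin_form_add_scaled:
  "bilin_form J S (\<lambda>j. u j + t * w j) (\<lambda>j. u j + t * w j)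
     = bilin_form J S u u + t * (bilin_form J S u w + bilin_form J S w u) + t\<^sup>2 * bilin_form J S w w"
  unfolding bilin_form_def
  by (simp add: algebra_simps sum.distrib sum_distrib_left power2_eq_square)

lemma bilin_form_scale:
  "bilin_form J S (\<lambda>j. c * u j) (\<lambda>j. c * u j) = c\<^sup>2 * bilin_form J S u u"
  unfolding bilin_form_def by (simp add: sum_distrib_left power2_eq_square algebra_simps)

lemma bilin_form_commute:
  assumes "\<forall>j\<in>J. \<forall>j'\<in>J. S j j' = S j' j"
  shows "bilin_form J S u v = bilin_form J S v u"
  unfolding bilin_form_def
  by (subst sum.swap) (use assms in \<open>auto intro!: sum.cong simp: mult_ac\<close>)

lemma bilin_form_attains_min_on_sphere:
  assumes "finite J" and "J \<noteq> {}"
  obtains x0 where "(\<Sum>j\<in>J. (x0 j)\<^sup>2) = 1"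
    and "\<And>x. (\<Sum>j\<in>J. (x j)\<^sup>2) = 1 \<Longrightarrow> bilin_form J S x0 x0 \<le> bilin_form J S x x"
proof -
  define X where "X = product_topology (\<lambda>_. euclideanreal) J"
  define K where "K = {x \<in> topspace X. (\<Sum>j\<in>J. (x j)\<^sup>2) \<in> {1}}"
  define R where "R = (\<lambda>x. bilin_form J S x x)"
  have topX: "topspace X = PiE J (\<lambda>_. UNIV)" unfolding X_def by simp
  have "continuous_map X euclideanreal (\<lambda>x. \<Sum>j\<in>J. (x j)\<^sup>2)"
    unfolding X_def power2_eq_square
    by (intro continuous_map_sum continuous_map_real_mult assms(1))
       (auto intro: continuous_map_product_projection)
  then have closed: "closedin X K"
    unfolding K_def by (rule closedin_continuous_map_preimage) simp
  have bounded: "K \<subseteq> PiE J (\<lambda>_. {-1..1})"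
  proof
    fix x assume "x \<in> K"
    then have x: "x \<in> PiE J (\<lambda>_. UNIV)" "(\<Sum>j\<in>J. (x j)\<^sup>2) = 1"
      by (auto simp: K_def topX)
    have "\<bar>x j\<bar> \<le> 1" if "j \<in> J" for j
      using member_le_sum[of j J "\<lambda>j. (x j)\<^sup>2"] that assms(1) x(2)
        abs_le_square_iff[of "x j" 1] by simp
    then show "x \<in> PiE J (\<lambda>_. {-1..1})"
      using x(1) by (auto simp: PiE_def Pi_def abs_le_iff)
  qed
  have "compactin X (PiE J (\<lambda>_. {-1..1}))"
    unfolding X_def by (simp add: compactin_PiE)
  then have "compactin X K" using bounded closed by (rule closed_compactin)
  moreover have "continuous_map X euclideanreal R"
    unfolding X_def R_def bilin_form_def
    by (intro continuous_map_sum continuous_map_real_mult assms(1)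
          continuous_map_const[THEN iffD2])
       (auto intro: continuous_map_product_projection)
  ultimately have "compactin euclideanreal (R ` K)" by (rule image_compactin)
  then have "compact (R ` K)" by simp
  obtain j0 where "j0 \<in> J" using assms(2) by auto
  define e :: vec where "e = restrict (\<lambda>j. if j = j0 then 1 else 0) J"
  have "(\<Sum>j\<in>J. (e j)\<^sup>2) = (\<Sum>j\<in>J. if j = j0 then 1 else 0)"
    unfolding e_def by (intro sum.cong) auto
  then have "e \<in> K" using \<open>j0 \<in> J\<close> assms(1) by (simp add: K_def topX e_def)
  then have "R ` K \<noteq> {}" by auto
  from compact_attains_inf[OF \<open>compact (R ` K)\<close> this]
  obtain x0 where x0: "x0 \<in> K" "\<And>y. y \<in> K \<Longrightarrow> R x0 \<le> R y" by auto
  show ?thesis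
  proof
    show "(\<Sum>j\<in>J. (x0 j)\<^sup>2) = 1" using x0 by (simp add: K_def)
  next
    fix x :: vec assume "(\<Sum>j\<in>J. (x j)\<^sup>2) = 1"
    then have "restrict x J \<in> K" by (simp add: K_def topX)
    then have "R x0 \<le> R (restrict x J)" by (rule x0(2))
    also have "R (restrict x J) = R x"
      unfolding R_def bilin_form_def by (intro sum.cong refl) auto
    finally show "bilin_form J S x0 x0 \<le> bilin_form J S x x" by (simp add: R_def)
  qed
qed

text \<open>Rayleigh: the minimum of the form on the unit sphere is an eigenvalue.\<close>

lemma sym_bilin_form_min_eigenvalue:
  assumes fin: "finite J" and ne: "J \<noteq> {}" and sym: "\<forall>j\<in>J. \<forall>j'\<in>J. S j j' = S j' j"
  obtains \<mu> where "real_eigenvalue J S \<mu>"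
    and "\<And>y. \<mu> * (\<Sum>j\<in>J. (y j)\<^sup>2) \<le> bilin_form J S y y"
proof -
  obtain x0 where x0: "(\<Sum>j\<in>J. (x0 j)\<^sup>2) = 1"
    "\<And>x. (\<Sum>j\<in>J. (x j)\<^sup>2) = 1 \<Longrightarrow> bilin_form J S x0 x0 \<le> bilin_form J S x x"
    using bilin_form_attains_min_on_sphere[OF fin ne] by blast
  define \<mu> where "\<mu> = bilin_form J S x0 x0"
  have bound: "\<mu> * (\<Sum>j\<in>J. (y j)\<^sup>2) \<le> bilin_form J S y y" for y
  proof (cases "(\<Sum>j\<in>J. (y j)\<^sup>2) = 0")
    case True
    then have "\<forall>j\<in>J. y j = 0" using fin by (simp add: sum_nonneg_eq_0_iff)
    then show ?thesis using True by (simp add: bilin_form_def)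
  next
    case False
    have pos: "(\<Sum>j\<in>J. (y j)\<^sup>2) > 0"
      using False by (simp add: sum_nonneg order_le_neq_trans)
    define c where "c = sqrt (\<Sum>j\<in>J. (y j)\<^sup>2)"
    have c: "c > 0" "c\<^sup>2 = (\<Sum>j\<in>J. (y j)\<^sup>2)"
      using pos by (auto simp: c_def)
    have "(\<Sum>j\<in>J. (inverse c * y j)\<^sup>2) = 1"
      using c False by (simp add: power_mult_distrib sum_distrib_left[symmetric] power_inverse)
    then have "\<mu> \<le> (inverse c)\<^sup>2 * bilin_form J S y y"
      unfolding \<mu>_def bilin_form_scale[symmetric] by (rule x0(2))
    then show ?thesis using c pos by (simp add: power_inverse field_simps)
  qed
  have stationary: "bilin_form J S w x0 = \<mu> * (\<Sum>j\<in>J. x0 j * w j)" for w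
  proof -
    have "0 \<le> (2 * bilin_form J S w x0 - 2 * \<mu> * (\<Sum>j\<in>J. x0 j * w j)) * t
               + (bilin_form J S w w - \<mu> * (\<Sum>j\<in>J. (w j)\<^sup>2)) * t\<^sup>2" for t
    proof -
      have "\<mu> * (\<Sum>j\<in>J. (x0 j + t * w j)\<^sup>2) \<le> bilin_form J S (\<lambda>j. x0 j + t * w j) (\<lambda>j. x0 j + t * w j)"
        by (rule bound)
      also have "\<dots> = \<mu> + t * (2 * bilin_form J S w x0) + t\<^sup>2 * bilin_form J S w w"
        by (simp add: bilin_form_add_scaled bilin_form_commute[OF sym, of x0 w] \<mu>_def)
      also have "(\<Sum>j\<in>J. (x0 j + t * w j)\<^sup>2)
          = 1 + 2 * t * (\<Sum>j\<in>J. x0 j * w j) + t\<^sup>2 * (\<Sum>j\<in>J. (w j)\<^sup>2)"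
        using x0(1)
        by (simp add: power2_sum sum.distrib sum_distrib_left algebra_simps power_mult_distrib)
      finally show ?thesis by (simp add: algebra_simps)
    qed
    from quadratic_nonneg_imp_linear_coeff_zero[OF this] show ?thesis by simp
  qed
  define w where "w = (\<lambda>j. (\<Sum>j'\<in>J. S j j' * x0 j') - \<mu> * x0 j)"
  have "(\<Sum>j\<in>J. (w j)\<^sup>2) = bilin_form J S w x0 - \<mu> * (\<Sum>j\<in>J. x0 j * w j)"
    unfolding bilin_form_def w_def
    by (simp add: power2_eq_square algebra_simps sum_subtractf sum_distrib_left
        sum_distrib_right sum.distrib)
  then have "(\<Sum>j\<in>J. (w j)\<^sup>2) = 0" using stationary[of w] by simp
  then have "\<forall>j\<in>J. w j = 0" using fin by (simp add: sum_nonneg_eq_0_iff)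
  moreover have "\<exists>j\<in>J. x0 j \<noteq> 0"
  proof (rule ccontr)
    assume "\<not> (\<exists>j\<in>J. x0 j \<noteq> 0)"
    then have "(\<Sum>j\<in>J. (x0 j)\<^sup>2) = 0" by simp
    with x0(1) show False by simp
  qed
  ultimately have "real_eigenvalue J S \<mu>"
    unfolding real_eigenvalue_def w_def by auto
  with bound show ?thesis using that by blast
qed

lemma sym_bilin_form_ge_if_not_min_eig_less:
  assumes "finite J" and "\<forall>j\<in>J. \<forall>j'\<in>J. S j j' = S j' j"
    and "\<not> min_eig_less J S \<epsilon>"
  shows "\<epsilon> * (\<Sum>j\<in>J. (y j)\<^sup>2) \<le> bilin_form J S y y"
proof (cases "J = {}")
  case True
  then show ?thesis by (simp add: bilin_form_def)
next
  case False
  then obtain \<mu> where \<mu>: "real_eigenvalue J S \<mu>"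
    and bound: "\<mu> * (\<Sum>j\<in>J. (y j)\<^sup>2) \<le> bilin_form J S y y"
    using sym_bilin_form_min_eigenvalue[OF assms(1) _ assms(2)] by metis
  have "\<epsilon> \<le> \<mu>" using \<mu> assms(3) by (auto simp: min_eig_less_def)
  then have "\<epsilon> * (\<Sum>j\<in>J. (y j)\<^sup>2) \<le> \<mu> * (\<Sum>j\<in>J. (y j)\<^sup>2)"
    by (intro mult_right_mono sum_nonneg) auto
  with bound show ?thesis by linarith
qed

section \<open>Polar factors\<close>

definition vdot :: "nat \<Rightarrow> vec \<Rightarrow> vec \<Rightarrow> real" where
  "vdot m u v = (\<Sum>a<m. u a * v a)"

lemma vdot_commute: "vdot m u v = vdot m v u"
  unfolding vdot_def by (simp add: mult.commute)

lemma vdot_lincomb_left: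
  "vdot m (\<lambda>a. c * u a + d * v a) w = c * vdot m u w + d * vdot m v w"
  unfolding vdot_def by (simp add: algebra_simps sum.distrib sum_distrib_left)

lemma vdot_lincomb_right:
  "vdot m w (\<lambda>a. c * u a + d * v a) = c * vdot m w u + d * vdot m w v"
  unfolding vdot_def by (simp add: algebra_simps sum.distrib sum_distrib_left)

lemma vdot_diff_left: "vdot m (\<lambda>a. u a - v a) w = vdot m u w - vdot m v w"
  unfolding vdot_def by (simp add: algebra_simps sum_subtractf)

lemma vdot_sum_left: "vdot m (\<lambda>a. \<Sum>i\<in>I. f i * g i a) w = (\<Sum>i\<in>I. f i * vdot m (g i) w)"
  unfolding vdot_def sum_distrib_right sum_distrib_left
  by (subst sum.swap) (simp add: mult.assoc)

lemma vdot_self_nonneg: "0 \<le> vdot m u u"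
  unfolding vdot_def by (simp add: sum_nonneg)

lemma mtmul_eq_vdot: "mtmul m Q X i j = vdot m (\<lambda>a. Q a i) (\<lambda>a. X a j)"
  unfolding mtmul_def vdot_def ..

lemma orth_cols_iff_vdot:
  "orth_cols m J Q \<longleftrightarrow>
     (\<forall>l\<in>J. \<forall>l'\<in>J. vdot m (\<lambda>a. Q a l) (\<lambda>a. Q a l') = (if l = l' then 1 else 0))"
  unfolding orth_cols_def vdot_def ..

lemma orth_cols_replace:
  assumes "orth_cols m J Q" and "orth_cols m K W"
    and "\<And>l l'. l \<in> K \<Longrightarrow> l' \<in> J - K \<Longrightarrow> vdot m (\<lambda>a. W a l) (\<lambda>a. Q a l') = 0"
  shows "orth_cols m J (\<lambda>a l. if l \<in> K then W a l else Q a l)"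
proof -
  have "vdot m (\<lambda>a. Q a l) (\<lambda>a. W a l') = 0" if "l \<in> J - K" "l' \<in> K" for l l'
    using assms(3)[OF that(2,1)] by (simp add: vdot_commute)
  with assms have "vdot m (\<lambda>a. if l \<in> K then W a l else Q a l) (\<lambda>a. if l' \<in> K then W a l' else Q a l')
      = (if l = l' then 1 else 0)" if "l \<in> J" "l' \<in> J" for l l'
    using that by (cases "l \<in> K"; cases "l' \<in> K") (auto simp: orth_cols_iff_vdot)
  then show ?thesis unfolding orth_cols_iff_vdot by blast
qed

lemma orth_cols_subset: "orth_cols m J Q \<Longrightarrow> K \<subseteq> J \<Longrightarrow> orth_cols m K Q"
  unfolding orth_cols_def by blast

lemma orth_cols_frob_inner_self:
  assumes "orth_cols m J Q"
  shows "frob_inner m J Q Q = real (card J)"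
proof -
  have "frob_inner m J Q Q = (\<Sum>j\<in>J. vdot m (\<lambda>a. Q a j) (\<lambda>a. Q a j))"
    unfolding frob_inner_def vdot_def by (rule sum.swap)
  also have "\<dots> = (\<Sum>j\<in>J. 1)"
    using assms unfolding orth_cols_iff_vdot by (intro sum.cong) auto
  finally show ?thesis by simp
qed

lemma in_polar_replace_cols:
  assumes pol: "in_polar m J X Q" and fin: "finite J" and "K \<subseteq> J"
    and "orth_cols m K W"
    and "\<And>l l'. l \<in> K \<Longrightarrow> l' \<in> J - K \<Longrightarrow> vdot m (\<lambda>a. W a l) (\<lambda>a. Q a l') = 0"
  shows "(\<Sum>l\<in>K. vdot m (\<lambda>a. W a l - Q a l) (\<lambda>a. X a l)) \<le> 0"
proof -
  define Q' where "Q' = (\<lambda>a l. if l \<in> K then W a l else Q a l)"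
  have "orth_cols m J Q'"
    unfolding Q'_def using pol assms(4,5) by (intro orth_cols_replace) (auto simp: in_polar_def)
  then have "frob_inner m J Q' X - frob_inner m J Q X \<le> 0"
    using pol by (simp add: in_polar_def)
  also have "frob_inner m J Q' X - frob_inner m J Q X
      = (\<Sum>l\<in>J. vdot m (\<lambda>a. Q' a l - Q a l) (\<lambda>a. X a l))"
    unfolding frob_inner_def vdot_def
    by (subst sum.swap) (simp add: sum_subtractf[symmetric] algebra_simps)
  also have "\<dots> = (\<Sum>l\<in>K. vdot m (\<lambda>a. W a l - Q a l) (\<lambda>a. X a l))"
    using fin \<open>K \<subseteq> J\<close> by (intro sum.mono_neutral_cong_right) (auto simp: Q'_def vdot_def)
  finally show ?thesis .
qed

text \<open>Rotating the column j of a maximiser towards the part of the j-th column of X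
  orthogonal to all columns would increase the objective unless that part vanishes.\<close>

lemma in_polar_col_expansion:
  assumes pol: "in_polar m J X Q" and fin: "finite J" and j: "j \<in> J" and a: "a < m"
  shows "X a j = (\<Sum>i\<in>J. mtmul m Q X i j * Q a i)"
proof -
  let ?S = "mtmul m Q X"
  have orthQ: "vdot m (\<lambda>a. Q a l) (\<lambda>a. Q a l') = (if l = l' then 1 else 0)"
    if "l \<in> J" "l' \<in> J" for l l'
    using pol that unfolding in_polar_def orth_cols_iff_vdot by blast
  define z where "z = (\<lambda>a. X a j - (\<Sum>i\<in>J. ?S i j * Q a i))"
  have zQ: "vdot m z (\<lambda>a. Q a l) = 0" if l: "l \<in> J" for l
  proof -
    have "vdot m z (\<lambda>a. Q a l)
        = ?S l j - (\<Sum>i\<in>J. ?S i j * vdot m (\<lambda>a. Q a i) (\<lambda>a. Q a l))"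
      unfolding z_def vdot_diff_left vdot_sum_left mtmul_eq_vdot
      by (simp add: vdot_commute[of m "\<lambda>a. X a j"])
    also have "(\<Sum>i\<in>J. ?S i j * vdot m (\<lambda>a. Q a i) (\<lambda>a. Q a l))
        = (\<Sum>i\<in>J. if i = l then ?S i j else 0)"
      using l by (intro sum.cong refl) (simp add: orthQ)
    also have "\<dots> = ?S l j" using fin l by simp
    finally show ?thesis by simp
  qed
  define N where "N = vdot m z z"
  have zX: "vdot m z (\<lambda>a. X a j) = N"
  proof -
    have "N = vdot m z (\<lambda>a. X a j) - (\<Sum>i\<in>J. ?S i j * vdot m z (\<lambda>a. Q a i))"
      unfolding N_def by (subst (2) z_def) (simp only: vdot_commute[of m z] vdot_diff_left vdot_sum_left)
    then show ?thesis by (simp add: zQ)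
  qed
  have "N = 0"
  proof (rule ccontr)
    assume "N \<noteq> 0"
    then have "N > 0" using vdot_self_nonneg[of m z] by (simp add: N_def)
    define nz where "nz = sqrt N"
    have nz: "nz > 0" "nz * nz = N" using \<open>N > 0\<close> by (auto simp: nz_def)
    have "nz = 0"
    proof (rule unit_circle_variation_imp_zero[of "?S j j"])
      fix c s :: real assume cs: "c\<^sup>2 + s\<^sup>2 = 1"
      define u where "u = (\<lambda>a. c * Q a j + (s / nz) * z a)"
      have "vdot m u u = c\<^sup>2 + s\<^sup>2 * (N / (nz * nz))"
        unfolding u_def vdot_lincomb_left vdot_lincomb_right
        using orthQ[OF j j] zQ[OF j] vdot_commute[of m "\<lambda>a. Q a j" z]
        by (simp add: N_def power2_eq_square)
      then have "orth_cols m {j} (\<lambda>a l. u a)"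
        using nz cs \<open>N > 0\<close> by (simp add: orth_cols_iff_vdot)
      moreover have "vdot m u (\<lambda>a. Q a l) = 0" if "l \<in> J - {j}" for l
        unfolding u_def vdot_lincomb_left using orthQ[OF j, of l] zQ[of l] that by auto
      ultimately have "(\<Sum>l\<in>{j}. vdot m (\<lambda>a. u a - Q a l) (\<lambda>a. X a l)) \<le> 0"
        using j by (intro in_polar_replace_cols[OF pol fin]) auto
      also have "(\<Sum>l\<in>{j}. vdot m (\<lambda>a. u a - Q a l) (\<lambda>a. X a l))
          = vdot m (\<lambda>a. u a - Q a j) (\<lambda>a. X a j)" by simp
      also have "\<dots> = (c - 1) * ?S j j + s * nz"
        unfolding vdot_diff_left u_def vdot_lincomb_left mtmul_eq_vdot zX
        using nz by (simp add: field_simps)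
      finally show "(c - 1) * ?S j j + s * nz \<le> 0" .
    qed
    with nz show False by simp
  qed
  then have "\<forall>a<m. z a = 0" unfolding N_def vdot_def by (simp add: sum_nonneg_eq_0_iff)
  with a show ?thesis unfolding z_def by simp
qed

text \<open>Rotating two columns of a maximiser in their common plane.\<close>

lemma in_polar_mtmul_sym:
  assumes pol: "in_polar m J X Q" and fin: "finite J" and j: "j \<in> J" and j': "j' \<in> J"
  shows "mtmul m Q X j j' = mtmul m Q X j' j"
proof (cases "j = j'")
  case False
  let ?S = "mtmul m Q X"
  have orthQ: "vdot m (\<lambda>a. Q a l) (\<lambda>a. Q a l') = (if l = l' then 1 else 0)"
    if "l \<in> J" "l' \<in> J" for l l'
    using pol that unfolding in_polar_def orth_cols_iff_vdot by blast
  define q where "q = (\<lambda>a. Q a j)"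
  define q' where "q' = (\<lambda>a. Q a j')"
  have qq: "vdot m q q = 1" "vdot m q' q' = 1" "vdot m q q' = 0" "vdot m q' q = 0"
    using orthQ[OF j j] orthQ[OF j' j'] orthQ[OF j j'] orthQ[OF j' j] False
    by (auto simp: q_def q'_def)
  have "?S j' j - ?S j j' = 0"
  proof (rule unit_circle_variation_imp_zero[of "?S j j + ?S j' j'"])
    fix c s :: real assume cs: "c\<^sup>2 + s\<^sup>2 = 1"
    define u where "u = (\<lambda>a. c * q a + s * q' a)"
    define u' where "u' = (\<lambda>a. (- s) * q a + c * q' a)"
    define W where "W = (\<lambda>a l. if l = j then u a else u' a)"
    have "vdot m u u = 1" "vdot m u' u' = 1" "vdot m u u' = 0" "vdot m u' u = 0"
      unfolding u_def u'_def vdot_lincomb_left vdot_lincomb_right qq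
      using cs by (simp_all add: power2_eq_square algebra_simps)
    then have "orth_cols m {j, j'} W"
      using False by (auto simp: orth_cols_iff_vdot W_def)
    moreover have "vdot m (\<lambda>a. W a l) (\<lambda>a. Q a l') = 0"
      if "l \<in> {j, j'}" "l' \<in> J - {j, j'}" for l l'
    proof -
      have "vdot m q (\<lambda>a. Q a l') = 0" "vdot m q' (\<lambda>a. Q a l') = 0"
        using orthQ[OF j, of l'] orthQ[OF j', of l'] that by (auto simp: q_def q'_def)
      then have "vdot m u (\<lambda>a. Q a l') = 0" "vdot m u' (\<lambda>a. Q a l') = 0"
        unfolding u_def u'_def vdot_lincomb_left by simp_all
      then show ?thesis
        using that False by (auto simp: W_def)
    qed
    ultimately have "(\<Sum>l\<in>{j, j'}. vdot m (\<lambda>a. W a l - Q a l) (\<lambda>a. X a l)) \<le> 0"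
      using j j' by (intro in_polar_replace_cols[OF pol fin]) auto
    also have "(\<Sum>l\<in>{j, j'}. vdot m (\<lambda>a. W a l - Q a l) (\<lambda>a. X a l))
        = vdot m (\<lambda>a. u a - q a) (\<lambda>a. X a j) + vdot m (\<lambda>a. u' a - q' a) (\<lambda>a. X a j')"
      using False by (simp add: W_def q_def q'_def)
    also have "\<dots> = (c - 1) * (?S j j + ?S j' j') + s * (?S j' j - ?S j j')"
      unfolding vdot_diff_left u_def u'_def vdot_lincomb_left q_def q'_def mtmul_eq_vdot
      by (simp add: algebra_simps)
    finally show "(c - 1) * (?S j j + ?S j' j') + s * (?S j' j - ?S j j') \<le> 0" .
  qed
  then show ?thesis by simp
qed simp

lemma frob_inner_diff_left:
  "frob_inner m J (\<lambda>a j. Q a j - P a j) X = frob_inner m J Q X - frob_inner m J P X"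
  unfolding frob_inner_def by (simp add: algebra_simps sum_subtractf)

lemma frob_inner_lincomb_right:
  "frob_inner m J R (\<lambda>a j. X a j + c * P a j) = frob_inner m J R X + c * frob_inner m J R P"
  unfolding frob_inner_def by (simp add: algebra_simps sum.distrib sum_distrib_left)

lemma frob_inner_cong_right:
  assumes "\<And>a j. a < m \<Longrightarrow> j \<in> J \<Longrightarrow> X a j = Y a j"
  shows "frob_inner m J R X = frob_inner m J R Y"
  unfolding frob_inner_def using assms by (intro sum.cong refl) auto

lemma frob_inner_mult_right:
  "frob_inner m J R (\<lambda>a j. \<Sum>i\<in>J. S i j * Z a i)
     = (\<Sum>j\<in>J. \<Sum>i\<in>J. S i j * vdot m (\<lambda>a. R a j) (\<lambda>a. Z a i))"
  unfolding frob_inner_def vdot_def sum_distrib_left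
  by (subst sum.swap) (auto intro!: sum.cong simp: sum.swap[of _ "{..<m}"] mult_ac)

lemma frob_inner_orth_mult_right:
  assumes "orth_cols m J Q" and "finite J"
  shows "frob_inner m J Q (\<lambda>a j. \<Sum>i\<in>J. S i j * Q a i) = (\<Sum>j\<in>J. S j j)"
  unfolding frob_inner_mult_right
proof (intro sum.cong refl)
  fix j assume j: "j \<in> J"
  have "(\<Sum>i\<in>J. S i j * vdot m (\<lambda>a. Q a j) (\<lambda>a. Q a i)) = (\<Sum>i\<in>J. if i = j then S i j else 0)"
    using assms(1) j by (intro sum.cong refl) (auto simp: orth_cols_iff_vdot)
  also have "\<dots> = S j j" using assms(2) j by simp
  finally show "(\<Sum>i\<in>J. S i j * vdot m (\<lambda>a. Q a j) (\<lambda>a. Q a i)) = S j j" .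
qed

lemma frob_inner_diff_self:
  "(\<Sum>a<m. \<Sum>j\<in>J. (Q a j - P a j)\<^sup>2)
     = frob_inner m J Q Q + frob_inner m J P P - 2 * frob_inner m J Q P"
  unfolding frob_inner_def power2_diff
  by (simp add: sum.distrib sum_subtractf sum_distrib_left power2_eq_square mult_ac)

lemma sum_bilin_form_rows_eq_twice_frob_inner:
  assumes fin: "finite J" and Q: "orth_cols m J Q" and P: "orth_cols m J P"
    and sym: "\<forall>j\<in>J. \<forall>j'\<in>J. S j j' = S j' j"
    and X: "\<And>a j. a < m \<Longrightarrow> j \<in> J \<Longrightarrow> X a j = (\<Sum>i\<in>J. S i j * Q a i)"
  shows "(\<Sum>a<m. bilin_form J S (\<lambda>j. Q a j - P a j) (\<lambda>j. Q a j - P a j))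
       = 2 * frob_inner m J (\<lambda>a j. Q a j - P a j) X"
proof -
  define D where "D = (\<lambda>a j. Q a j - P a j)"
  define X' where "X' = (\<lambda>a j. \<Sum>i\<in>J. S i j * Q a i)"
  define Y where "Y = (\<lambda>a j. \<Sum>i\<in>J. S i j * P a i)"
  define T where "T = (\<Sum>j\<in>J. \<Sum>i\<in>J. S i j * vdot m (\<lambda>a. P a j) (\<lambda>a. Q a i))"
  have "bilin_form J S (D a) (D a) = (\<Sum>j\<in>J. D a j * (X' a j - Y a j))" for a
  proof -
    have "(\<Sum>j'\<in>J. S j j' * D a j') = X' a j - Y a j" if "j \<in> J" for j
      using sym that unfolding D_def X'_def Y_def
      by (auto simp: algebra_simps sum_subtractf intro!: sum.cong)
    then show ?thesis
      unfolding bilin_form_def mult.assoc sum_distrib_left[symmetric] by simp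
  qed
  then have "(\<Sum>a<m. bilin_form J S (D a) (D a)) = frob_inner m J D X' - frob_inner m J D Y"
    by (simp add: frob_inner_def right_diff_distrib sum_subtractf)
  also have "frob_inner m J D X' = (\<Sum>j\<in>J. S j j) - T"
    unfolding D_def frob_inner_diff_left X'_def frob_inner_orth_mult_right[OF Q fin]
    by (simp add: frob_inner_mult_right T_def)
  also have "frob_inner m J D Y = T - (\<Sum>j\<in>J. S j j)"
  proof -
    have "frob_inner m J Q Y = T"
      unfolding Y_def frob_inner_mult_right T_def
      by (subst sum.swap) (use sym in \<open>auto intro!: sum.cong simp: vdot_commute\<close>)
    then show ?thesis
      unfolding D_def frob_inner_diff_left Y_def frob_inner_orth_mult_right[OF P fin] by simp
  qed
  also have "frob_inner m J D X = frob_inner m J D X'"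
    unfolding X'_def by (rule frob_inner_cong_right) (rule X)
  ultimately show ?thesis
    using \<open>frob_inner m J D X' = (\<Sum>j\<in>J. S j j) - T\<close> by (simp add: D_def)
qed

lemma in_polar_ascent:
  assumes pol: "in_polar m J X Q" and fin: "finite J" and P: "orth_cols m J P"
    and not_small: "\<not> min_eig_less J (mtmul m Q X) \<epsilon>"
  shows "\<epsilon> / 2 * (\<Sum>a<m. \<Sum>j\<in>J. (Q a j - P a j)\<^sup>2)
           \<le> frob_inner m J (\<lambda>a j. Q a j - P a j) X"
proof -
  let ?S = "mtmul m Q X"
  have sym: "\<forall>j\<in>J. \<forall>j'\<in>J. ?S j j' = ?S j' j"
    using in_polar_mtmul_sym[OF pol fin] by blast
  have "(\<Sum>a<m. \<epsilon> * (\<Sum>j\<in>J. (Q a j - P a j)\<^sup>2))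
      \<le> (\<Sum>a<m. bilin_form J ?S (\<lambda>j. Q a j - P a j) (\<lambda>j. Q a j - P a j))"
    by (intro sum_mono sym_bilin_form_ge_if_not_min_eig_less[OF fin sym not_small])
  then have "\<epsilon> * (\<Sum>a<m. \<Sum>j\<in>J. (Q a j - P a j)\<^sup>2)
      \<le> (\<Sum>a<m. bilin_form J ?S (\<lambda>j. Q a j - P a j) (\<lambda>j. Q a j - P a j))"
    by (simp only: sum_distrib_left)
  also have "\<dots> = 2 * frob_inner m J (\<lambda>a j. Q a j - P a j) X"
    using pol fin P sym in_polar_col_expansion[OF pol fin]
    by (intro sum_bilin_form_rows_eq_twice_frob_inner) (auto simp: in_polar_def)
  finally show ?thesis by simp
qed

lemma in_polar_proximal_ascent:
  assumes pol: "in_polar m J (\<lambda>a j. X a j + \<epsilon> * P a j) Q" and P: "orth_cols m J P"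
  shows "\<epsilon> / 2 * (\<Sum>a<m. \<Sum>j\<in>J. (Q a j - P a j)\<^sup>2)
           \<le> frob_inner m J (\<lambda>a j. Q a j - P a j) X"
proof -
  have Q: "orth_cols m J Q" using pol by (simp add: in_polar_def)
  have "frob_inner m J P (\<lambda>a j. X a j + \<epsilon> * P a j) \<le> frob_inner m J Q (\<lambda>a j. X a j + \<epsilon> * P a j)"
    using pol P by (simp add: in_polar_def)
  moreover have "frob_inner m J Q P = frob_inner m J P Q"
    unfolding frob_inner_def by (simp add: mult.commute)
  ultimately show ?thesis
    unfolding frob_inner_diff_self frob_inner_diff_left frob_inner_lincomb_right
      orth_cols_frob_inner_self[OF P] orth_cols_frob_inner_self[OF Q]
    by (simp add: algebra_simps)
qed

section \<open>Contractions along one sweep\<close>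

lemma finite_tidx: "finite (tidx k n)"
  unfolding tidx_def by (rule finite_PiE) auto

lemma tcontr_eq_vdot_tcontr_mode:
  assumes i: "i \<in> {1..k}"
  shows "tcontr k n A u = vdot (n i) (tcontr_mode k n A u i) (u i)"
proof -
  have "(\<lambda>\<iota>. \<iota> i) ` tidx k n \<subseteq> {..<n i}"
    using i unfolding tidx_def by (auto simp: PiE_def Pi_def)
  then have "tcontr k n A u
      = (\<Sum>a<n i. \<Sum>\<iota>\<in>{\<iota>\<in>tidx k n. \<iota> i = a}. A \<iota> * (\<Prod>l\<in>{1..k}. u l (\<iota> l)))"
    unfolding tcontr_def by (intro sum.group[symmetric] finite_tidx) auto
  also have "\<dots> = (\<Sum>a<n i. \<Sum>\<iota>\<in>{\<iota>\<in>tidx k n. \<iota> i = a}.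
                      A \<iota> * (\<Prod>l\<in>{1..k} - {i}. u l (\<iota> l)) * u i a)"
    using i by (intro sum.cong refl) (auto simp: prod.remove mult_ac)
  finally show ?thesis
    unfolding tcontr_mode_def vdot_def by (simp add: sum_distrib_right)
qed

lemma tcontr_cong:
  assumes "\<And>l. l \<in> {1..k} \<Longrightarrow> u l = v l"
  shows "tcontr k n A u = tcontr k n A v"
  unfolding tcontr_def using assms by (intro sum.cong refl arg_cong2[where f="(*)"] prod.cong) auto

lemma tcontr_mode_cong:
  assumes "\<And>l. l \<in> {1..k} \<Longrightarrow> l \<noteq> i \<Longrightarrow> u l = v l"
  shows "tcontr_mode k n A u i = tcontr_mode k n A v i"
  unfolding tcontr_mode_def using assms
  by (intro ext sum.cong refl arg_cong2[where f="(*)"] prod.cong) auto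

lemma lam_eq_vdot_prev_col:
  assumes "i \<in> {1..k}"
  shows "lam k n A U p i j = vdot (n i) (\<lambda>a. Vmat k n A U p i a j) (col U (p - 1) i j)"
  unfolding lam_def Vmat_def tcontr_eq_vdot_tcontr_mode[OF assms]
  by (simp add: xvec_def)

lemma lam_Suc_eq_vdot_col:
  assumes "i \<in> {1..k}"
  shows "lam k n A U p (Suc i) j = vdot (n i) (\<lambda>a. Vmat k n A U p i a j) (col U p i j)"
proof -
  have "tcontr_mode k n A (xvec U p (Suc i) j) i = tcontr_mode k n A (xvec U p i j) i"
    by (rule tcontr_mode_cong) (auto simp: xvec_def)
  then show ?thesis
    unfolding lam_def Vmat_def tcontr_eq_vdot_tcontr_mode[OF assms] by (simp add: xvec_def)
qed

lemma lam_1: "lam k n A U p 1 j = tcontr k n A (\<lambda>l. col U (p - 1) l j)"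
  unfolding lam_def by (rule tcontr_cong) (auto simp: xvec_def)

lemma lam_Suc_k: "lam k n A U p (Suc k) j = tcontr k n A (\<lambda>l. col U p l j)"
  unfolding lam_def by (rule tcontr_cong) (auto simp: xvec_def)

lemma fobj_diff_eq_sum_lam_increments:
  "fobj k n A U J p - fobj k n A U J (p - 1)
     = (\<Sum>i = 1..k. \<Sum>j\<in>J. (lam k n A U p (Suc i) j)\<^sup>2 - (lam k n A U p i j)\<^sup>2)"
proof -
  have "(\<Sum>i = 1..k. \<Sum>j\<in>J. (lam k n A U p (Suc i) j)\<^sup>2 - (lam k n A U p i j)\<^sup>2)
      = (\<Sum>j\<in>J. (lam k n A U p (Suc k) j)\<^sup>2 - (lam k n A U p 1 j)\<^sup>2)"
    by (subst sum.swap) (intro sum.cong refl sum_Suc_diff, simp)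
  then show ?thesis
    unfolding fobj_def lam_1 lam_Suc_k by (simp add: sum_subtractf)
qed

lemma normalized_step:
  fixes V uo un :: vec
  assumes l: "l = vdot m V uo" "l \<noteq> 0"
    and un: "\<And>a. a < m \<Longrightarrow> un a = sgn l * V a / sqrt (\<Sum>b<m. (V b)\<^sup>2)"
  shows "sqrt (\<Sum>b<m. (V b)\<^sup>2) > 0"
    and "(\<Sum>a<m. (un a)\<^sup>2) = 1"
    and "vdot m V un = sgn l * sqrt (\<Sum>b<m. (V b)\<^sup>2)"
proof -
  define N where "N = sqrt (\<Sum>b<m. (V b)\<^sup>2)"
  obtain a0 where a0: "a0 < m" "V a0 \<noteq> 0"
    using l unfolding vdot_def by (metis (no_types, lifting) lessThan_iff mult_zero_left sum.neutral)
  have "0 < (V a0)\<^sup>2" using a0 by simp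
  also have "\<dots> \<le> (\<Sum>b<m. (V b)\<^sup>2)" using a0 by (intro member_le_sum) auto
  finally have pos: "(\<Sum>b<m. (V b)\<^sup>2) > 0" .
  then show "sqrt (\<Sum>b<m. (V b)\<^sup>2) > 0" by simp
  then have "N > 0" by (simp add: N_def)
  have NN: "N\<^sup>2 = (\<Sum>b<m. (V b)\<^sup>2)" unfolding N_def using pos by simp
  have "(\<Sum>a<m. (un a)\<^sup>2) = (\<Sum>a<m. (sgn l)\<^sup>2 * (V a)\<^sup>2 / N\<^sup>2)"
    by (intro sum.cong refl) (simp add: un N_def power_divide power_mult_distrib)
  also have "\<dots> = 1" using l(2) NN pos by (simp add: sgn_if sum_divide_distrib[symmetric])
  finally show "(\<Sum>a<m. (un a)\<^sup>2) = 1" .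
  have "vdot m V un = sgn l * ((\<Sum>a<m. (V a)\<^sup>2) / N)"
    unfolding vdot_def by (simp add: un N_def power2_eq_square sum_divide_distrib sum_distrib_left mult_ac)
  also have "\<dots> = sgn l * N"
    unfolding NN[symmetric] using \<open>N > 0\<close> by (simp add: power2_eq_square)
  finally show "vdot m V un = sgn l * sqrt (\<Sum>b<m. (V b)\<^sup>2)" unfolding N_def .
qed

text \<open>With N the norm of V, Cauchy-Schwarz gives kappa \<le> |l| \<le> N, and
  |un - uo|^2 = 2 - 2 |l| / N.\<close>

lemma normalized_step_ascent:
  fixes V uo un :: vec
  assumes l: "l = vdot m V uo" and kl: "\<kappa> \<le> \<bar>l\<bar>" and k0: "0 < \<kappa>"
    and un: "\<And>a. a < m \<Longrightarrow> un a = sgn l * V a / sqrt (\<Sum>b<m. (V b)\<^sup>2)"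
    and uo: "(\<Sum>a<m. (uo a)\<^sup>2) = 1"
  shows "\<kappa> \<le> \<bar>vdot m V un\<bar>"
    and "\<kappa>\<^sup>2 * (\<Sum>a<m. (un a - uo a)\<^sup>2) \<le> (vdot m V un)\<^sup>2 - l\<^sup>2"
proof -
  have l0: "l \<noteq> 0" using kl k0 by auto
  note step = normalized_step[OF l l0 un]
  define N where "N = sqrt (\<Sum>b<m. (V b)\<^sup>2)"
  have N: "N > 0" "N\<^sup>2 = (\<Sum>b<m. (V b)\<^sup>2)" using step(1) by (auto simp: N_def sum_nonneg)
  have "l\<^sup>2 \<le> (\<Sum>b<m. (V b)\<^sup>2) * (\<Sum>a<m. (uo a)\<^sup>2)"
    unfolding l vdot_def by (rule Cauchy_Schwarz_ineq_sum)
  then have "l\<^sup>2 \<le> N\<^sup>2" using uo N by simp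
  then have "\<bar>l\<bar> \<le> N" using abs_le_square_iff[of l N] N(1) by simp
  have new: "vdot m V un = sgn l * N" using step(3) by (simp add: N_def)
  then show "\<kappa> \<le> \<bar>vdot m V un\<bar>" using kl \<open>\<bar>l\<bar> \<le> N\<close> l0 by (simp add: abs_mult sgn_if)
  have "vdot m un uo = sgn l * vdot m V uo / N"
    unfolding vdot_def by (simp add: un N_def sum_distrib_left sum_divide_distrib mult_ac)
  then have "vdot m un uo = \<bar>l\<bar> / N" unfolding l[symmetric] by (simp add: sgn_mult_abs abs_sgn mult.commute)
  moreover have "(\<Sum>a<m. (un a - uo a)\<^sup>2) = (\<Sum>a<m. (un a)\<^sup>2) + (\<Sum>a<m. (uo a)\<^sup>2) - 2 * vdot m un uo"
    unfolding vdot_def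
    by (simp add: power2_diff sum.distrib sum_subtractf sum_distrib_left mult.assoc)
  ultimately have dist: "(\<Sum>a<m. (un a - uo a)\<^sup>2) = 2 - 2 * \<bar>l\<bar> / N"
    using step(2) uo by simp
  have "\<kappa> * \<kappa> \<le> N * \<bar>l\<bar>" "\<kappa> * \<kappa> \<le> N * N"
    using kl \<open>\<bar>l\<bar> \<le> N\<close> k0 by (intro mult_mono; simp)+
  then have "2 * \<kappa>\<^sup>2 \<le> N * (N + \<bar>l\<bar>)"
    by (simp add: power2_eq_square algebra_simps)
  then have "2 * \<kappa>\<^sup>2 * (N - \<bar>l\<bar>) \<le> N * (N + \<bar>l\<bar>) * (N - \<bar>l\<bar>)"
    using \<open>\<bar>l\<bar> \<le> N\<close> by (intro mult_right_mono) auto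
  then have "\<kappa>\<^sup>2 * (2 - 2 * \<bar>l\<bar> / N) \<le> N\<^sup>2 - l\<^sup>2"
    using N(1) by (simp add: field_simps power2_eq_square)
  moreover have "(vdot m V un)\<^sup>2 = N\<^sup>2" using new l0 by (simp add: power_mult_distrib sgn_if)
  ultimately show "\<kappa>\<^sup>2 * (\<Sum>a<m. (un a - uo a)\<^sup>2) \<le> (vdot m V un)\<^sup>2 - l\<^sup>2"
    using dist by simp
qed

section \<open>Ascent of the iAPD-ALS iteration\<close>

locale iapd_als_run =
  fixes k s r :: nat and n :: "nat \<Rightarrow> nat" and A :: tensor
    and \<epsilon> \<kappa> :: real and U :: "nat \<Rightarrow> nat \<Rightarrow> mat" and Js :: "nat \<Rightarrow> nat set"
  assumes run: "iAPD_ALS k s n r A \<epsilon> \<kappa> U Js"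
    and s_pos: "1 \<le> s" and s_le_k: "s \<le> k"
begin

lemma kappa_pos: "0 < \<kappa>"
  using run unfolding iAPD_ALS_def by blast

lemma Js_0: "Js 0 = {..<r}"
  using run unfolding iAPD_ALS_def by blast

lemma orth_cols_U_0: "i \<in> {1..s} \<Longrightarrow> orth_cols (n i) (Js 0) (U 0 i)"
  using run unfolding iAPD_ALS_def by auto

lemma unit_cols_U_0: "i \<in> {s+1..k} \<Longrightarrow> unit_cols (n i) (Js 0) (U 0 i)"
  using run unfolding iAPD_ALS_def by auto

lemma polar_step:
  assumes "1 \<le> p" and "i \<in> {1..s}"
  shows "(in_polar (n i) (Js (p - 1)) (VLam k n A U p i) (U p i) \<and>
          \<not> min_eig_less (Js (p - 1)) (mtmul (n i) (U p i) (VLam k n A U p i)) \<epsilon>)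
       \<or> in_polar (n i) (Js (p - 1)) (\<lambda>a j. VLam k n A U p i a j + \<epsilon> * U (p - 1) i a j) (U p i)"
  using run assms unfolding iAPD_ALS_def by blast

lemma Js_step:
  "1 \<le> p \<Longrightarrow> Js p = {j \<in> Js (p - 1). \<kappa> \<le> \<bar>mtmul (n s) (U p s) (Vmat k n A U p s) j j\<bar>}"
  using run unfolding iAPD_ALS_def by blast

lemma normalize_step:
  assumes "1 \<le> p" and "i \<in> {s+1..k}" and "j \<in> Js p" and "a < n i"
  shows "U p i a j = sgn (lam k n A U p i j) * Vmat k n A U p i a j
                       / sqrt (\<Sum>b<n i. (Vmat k n A U p i b j)\<^sup>2)"
  using run assms unfolding iAPD_ALS_def by blast

lemma Js_subset_prev: "1 \<le> p \<Longrightarrow> Js p \<subseteq> Js (p - 1)"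
  using Js_step by auto

lemma finite_Js: "finite (Js p)"
proof -
  have "Js p \<subseteq> {..<r}"
    by (induction p) (use Js_0 Js_subset_prev[of "Suc _"] in auto)
  then show ?thesis using finite_subset by blast
qed

lemma orth_cols_U:
  assumes "i \<in> {1..s}"
  shows "orth_cols (n i) (Js p) (U p i)"
proof (cases "p = 0")
  case False
  then have "orth_cols (n i) (Js (p - 1)) (U p i)"
    using polar_step[of p i] assms by (auto simp: in_polar_def)
  then show ?thesis using Js_subset_prev[of p] False by (auto intro: orth_cols_subset)
qed (use orth_cols_U_0 assms in simp)

lemma kappa_le_lam_Suc_s:
  assumes "1 \<le> p" and "j \<in> Js p"
  shows "\<kappa> \<le> \<bar>lam k n A U p (Suc s) j\<bar>"
proof -
  have "lam k n A U p (Suc s) j = mtmul (n s) (U p s) (Vmat k n A U p s) j j"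
    using s_pos s_le_k
    by (simp add: lam_Suc_eq_vdot_col mtmul_eq_vdot vdot_commute col_def)
  then show ?thesis using Js_step[OF assms(1)] assms(2) by auto
qed

lemma lam_nonzero:
  assumes "1 \<le> p" and "j \<in> Js p" and "Suc s \<le> i" and "i \<le> k"
  shows "lam k n A U p i j \<noteq> 0"
  using assms(3,4)
proof (induction i rule: nat_induct_at_least)
  case base
  then show ?case using kappa_le_lam_Suc_s[OF assms(1,2)] kappa_pos by auto
next
  case (Suc i)
  then have i: "i \<in> {1..k}" "i \<in> {s+1..k}" using s_pos by auto
  have "lam k n A U p (Suc i) j = sgn (lam k n A U p i j) * sqrt (\<Sum>b<n i. (Vmat k n A U p i b j)\<^sup>2)"
    unfolding lam_Suc_eq_vdot_col[OF i(1)] col_def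
    using Suc normalize_step[OF assms(1) i(2) assms(2)]
    by (intro normalized_step(3)[OF lam_eq_vdot_prev_col[OF i(1)]]) auto
  moreover have "sqrt (\<Sum>b<n i. (Vmat k n A U p i b j)\<^sup>2) > 0"
    using Suc normalize_step[OF assms(1) i(2) assms(2)]
    by (intro normalized_step(1)[OF lam_eq_vdot_prev_col[OF i(1)]]) auto
  ultimately show ?case using Suc by (simp add: sgn_if)
qed

lemma unit_cols_U:
  assumes "i \<in> {s+1..k}"
  shows "unit_cols (n i) (Js p) (U p i)"
proof (cases "p = 0")
  case False
  have ik: "i \<in> {1..k}" using assms s_pos by auto
  have "(\<Sum>a<n i. (U p i a j)\<^sup>2) = 1" if "j \<in> Js p" for j
    using lam_nonzero[of p j i] normalize_step[of p i j] False assms that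
    by (intro normalized_step(2)[OF lam_eq_vdot_prev_col[OF ik]]) auto
  then show ?thesis unfolding unit_cols_def by blast
qed (use unit_cols_U_0 assms in simp)

lemma kappa_le_lam:
  assumes "1 \<le> p" and "j \<in> Js p" and "Suc s \<le> i" and "i \<le> k"
  shows "\<kappa> \<le> \<bar>lam k n A U p i j\<bar>"
  using assms(3,4)
proof (induction i rule: nat_induct_at_least)
  case base
  then show ?case using kappa_le_lam_Suc_s[OF assms(1,2)] by simp
next
  case (Suc i)
  then have i: "i \<in> {1..k}" "i \<in> {s+1..k}" using s_pos by auto
  have "(\<Sum>a<n i. (col U (p - 1) i j a)\<^sup>2) = 1"
    using unit_cols_U[OF i(2), of "p - 1"] Js_subset_prev[OF assms(1)] assms(2)
    by (auto simp: unit_cols_def col_def)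
  then show ?case
    unfolding lam_Suc_eq_vdot_col[OF i(1)]
    using Suc normalize_step[OF assms(1) i(2) assms(2)] kappa_pos
    by (intro normalized_step_ascent(1)[OF lam_eq_vdot_prev_col[OF i(1)]]) (auto simp: col_def)
qed

lemma orth_mode_ascent:
  assumes p: "1 \<le> p" and i: "i \<in> {1..s}"
  shows "\<epsilon> * (\<Sum>a<n i. \<Sum>j\<in>Js (p - 1). (U p i a j - U (p - 1) i a j)\<^sup>2)
           \<le> (\<Sum>j\<in>Js (p - 1). (lam k n A U p (Suc i) j)\<^sup>2 - (lam k n A U p i j)\<^sup>2)"
proof -
  define J where "J = Js (p - 1)"
  define X where "X = VLam k n A U p i"
  define L where "L = lam k n A U p"
  have ik: "i \<in> {1..k}" using i s_le_k by auto
  have "frob_inner (n i) J (\<lambda>a j. U p i a j - U (p - 1) i a j) X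
      = (\<Sum>j\<in>J. L i j * (L (Suc i) j - L i j))"
  proof -
    have "L (Suc i) j - L i j = vdot (n i) (\<lambda>a. Vmat k n A U p i a j) (\<lambda>a. U p i a j - U (p - 1) i a j)" for j
      unfolding L_def lam_Suc_eq_vdot_col[OF ik] lam_eq_vdot_prev_col[OF ik]
      by (simp add: vdot_def col_def sum_subtractf algebra_simps)
    then show ?thesis
      unfolding frob_inner_def X_def VLam_def L_def
      by (subst sum.swap) (simp add: vdot_def sum_distrib_left mult_ac)
  qed
  also have "\<dots> \<le> (\<Sum>j\<in>J. (L (Suc i) j)\<^sup>2 - (L i j)\<^sup>2) / 2"
    unfolding sum_divide_distrib
  proof (intro sum_mono)
    fix j
    have "0 \<le> (L (Suc i) j - L i j)\<^sup>2" by simp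
    then show "L i j * (L (Suc i) j - L i j) \<le> ((L (Suc i) j)\<^sup>2 - (L i j)\<^sup>2) / 2"
      by (simp add: power2_eq_square algebra_simps)
  qed
  finally have "frob_inner (n i) J (\<lambda>a j. U p i a j - U (p - 1) i a j) X
      \<le> (\<Sum>j\<in>J. (L (Suc i) j)\<^sup>2 - (L i j)\<^sup>2) / 2" .
  moreover have "\<epsilon> / 2 * (\<Sum>a<n i. \<Sum>j\<in>J. (U p i a j - U (p - 1) i a j)\<^sup>2)
      \<le> frob_inner (n i) J (\<lambda>a j. U p i a j - U (p - 1) i a j) X"
    using polar_step[OF p i] orth_cols_U[OF i, of "p - 1"] finite_Js[of "p - 1"]
      in_polar_ascent in_polar_proximal_ascent
    unfolding J_def X_def by blast
  ultimately show ?thesis unfolding J_def L_def by simp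
qed

lemma unit_mode_ascent:
  assumes p: "1 \<le> p" and i: "i \<in> {s+1..k}"
  shows "\<kappa>\<^sup>2 * (\<Sum>a<n i. \<Sum>j\<in>Js p. (U p i a j - U (p - 1) i a j)\<^sup>2)
           \<le> (\<Sum>j\<in>Js p. (lam k n A U p (Suc i) j)\<^sup>2 - (lam k n A U p i j)\<^sup>2)"
proof -
  have ik: "i \<in> {1..k}" using i s_pos by auto
  have "\<kappa>\<^sup>2 * (\<Sum>a<n i. (U p i a j - U (p - 1) i a j)\<^sup>2)
      \<le> (lam k n A U p (Suc i) j)\<^sup>2 - (lam k n A U p i j)\<^sup>2" if j: "j \<in> Js p" for j
  proof -
    have "(\<Sum>a<n i. (col U (p - 1) i j a)\<^sup>2) = 1"
      using unit_cols_U[OF i, of "p - 1"] Js_subset_prev[OF p] j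
      by (auto simp: unit_cols_def col_def)
    moreover have "\<kappa> \<le> \<bar>lam k n A U p i j\<bar>"
      using kappa_le_lam[OF p j] i by auto
    moreover have "col U p i j a = sgn (lam k n A U p i j) * Vmat k n A U p i a j
                       / sqrt (\<Sum>b<n i. (Vmat k n A U p i b j)\<^sup>2)" if "a < n i" for a
      using normalize_step[OF p i j that] by (simp add: col_def)
    ultimately have "\<kappa>\<^sup>2 * (\<Sum>a<n i. (col U p i j a - col U (p - 1) i j a)\<^sup>2)
        \<le> (vdot (n i) (\<lambda>a. Vmat k n A U p i a j) (col U p i j))\<^sup>2 - (lam k n A U p i j)\<^sup>2"
      using normalized_step_ascent(2)[OF lam_eq_vdot_prev_col[OF ik] _ kappa_pos] by blast
    then show ?thesis unfolding lam_Suc_eq_vdot_col[OF ik] by (simp add: col_def)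
  qed
  then show ?thesis
    unfolding sum_distrib_left by (subst sum.swap) (intro sum_mono, simp)
qed

lemma mode_ascent_without_truncation:
  assumes p: "1 \<le> p" and no_trunc: "Js p = Js (p - 1)" and i: "i \<in> {1..k}"
    and c: "c \<le> \<epsilon>" "c \<le> \<kappa>\<^sup>2"
  shows "c * (\<Sum>a<n i. \<Sum>j\<in>Js p. (U p i a j - U (p - 1) i a j)\<^sup>2)
           \<le> (\<Sum>j\<in>Js p. (lam k n A U p (Suc i) j)\<^sup>2 - (lam k n A U p i j)\<^sup>2)"
proof -
  have dist_nonneg: "0 \<le> (\<Sum>a<n i. \<Sum>j\<in>Js p. (U p i a j - U (p - 1) i a j)\<^sup>2)"
    by (intro sum_nonneg) simp
  show ?thesis
  proof (cases "i \<le> s")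
    case True
    with i have "i \<in> {1..s}" by simp
    have "c * (\<Sum>a<n i. \<Sum>j\<in>Js p. (U p i a j - U (p - 1) i a j)\<^sup>2)
        \<le> \<epsilon> * (\<Sum>a<n i. \<Sum>j\<in>Js p. (U p i a j - U (p - 1) i a j)\<^sup>2)"
      using c(1) dist_nonneg by (rule mult_right_mono)
    also have "\<dots> \<le> (\<Sum>j\<in>Js p. (lam k n A U p (Suc i) j)\<^sup>2 - (lam k n A U p i j)\<^sup>2)"
      using orth_mode_ascent[OF p \<open>i \<in> {1..s}\<close>] no_trunc by simp
    finally show ?thesis .
  next
    case False
    with i have "i \<in> {s+1..k}" by simp
    have "c * (\<Sum>a<n i. \<Sum>j\<in>Js p. (U p i a j - U (p - 1) i a j)\<^sup>2)
        \<le> \<kappa>\<^sup>2 * (\<Sum>a<n i. \<Sum>j\<in>Js p. (U p i a j - U (p - 1) i a j)\<^sup>2)"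
      using c(2) dist_nonneg by (rule mult_right_mono)
    also have "\<dots> \<le> (\<Sum>j\<in>Js p. (lam k n A U p (Suc i) j)\<^sup>2 - (lam k n A U p i j)\<^sup>2)"
      by (rule unit_mode_ascent[OF p \<open>i \<in> {s+1..k}\<close>])
    finally show ?thesis .
  qed
qed

end

theorem proposition5p4:
  fixes k s r :: nat and n :: "nat \<Rightarrow> nat" and A :: tensor
    and \<epsilon> \<kappa> :: real and U :: "nat \<Rightarrow> nat \<Rightarrow> mat" and Js :: "nat \<Rightarrow> nat set"
  assumes "k \<ge> 3" and "1 \<le> s" and "s \<le> k"
    and "\<forall>i\<in>{1..s}. r \<le> n i"
    and "\<exists>\<iota>\<in>tidx k n. A \<iota> \<noteq> 0"
    and "\<epsilon> > 0"
    and "iAPD_ALS k s n r A \<epsilon> \<kappa> U Js"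
    and "p \<ge> 1"
    and "Js p = Js (p - 1)"
  shows "fobj k n A U (Js p) p - fobj k n A U (Js (p - 1)) (p - 1)
           \<ge> min \<epsilon> (2 * \<kappa>\<^sup>2) / 2 * frob_dist2 k n U (Js p) p (p - 1)"
proof -
  \<comment> \<open>k \<ge> 3, r \<le> n i and A \<noteq> 0 only make the iteration meaningful; the estimate does not need them.\<close>
  interpret iapd_als_run k s r n A \<epsilon> \<kappa> U Js
    using assms(2,3,7) by unfold_locales
  have "min \<epsilon> (2 * \<kappa>\<^sup>2) / 2 * frob_dist2 k n U (Js p) p (p - 1)
      \<le> (\<Sum>i = 1..k. \<Sum>j\<in>Js p. (lam k n A U p (Suc i) j)\<^sup>2 - (lam k n A U p i j)\<^sup>2)"
    unfolding frob_dist2_def sum_distrib_left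
    using assms(6)
    by (intro sum_mono mode_ascent_without_truncation[OF assms(8,9), unfolded sum_distrib_left]) auto
  also have "\<dots> = fobj k n A U (Js p) p - fobj k n A U (Js (p - 1)) (p - 1)"
    unfolding assms(9)[symmetric] by (rule fobj_diff_eq_sum_lam_increments[symmetric])
  finally show ?thesis .
qed

end
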